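(* Let $d\ge1$, $m\in\mathbb{N}$ ($m\ge1$), and let $A_0,A_1\in\mathbb{R}^{d\times d}$ be constant matrices. Let $G:\mathbb{Z}_0^\infty\to\mathbb{R}^{d\times d}$ satisfy $A_1G(u)=G(u)A_1$ for all $u\in\mathbb{Z}_0^\infty$, and let $\Psi:\mathbb{Z}_{-m}^0\to\mathbb{R}^{d\times d}$ satisfy $A_1\Psi(u)=\Psi(u)A_1$ for all $u\in\mathbb{Z}_{-m}^0$. Let $Z$ be the discrete function defined in the context. Then \[ X(u)=Z(u)\Psi(-m)+\sum_{r=-m+1}^{0}Z(u-m-r)\,\Delta\Psi(r-1)+\sum_{r=1}^{u}Z(u-m-r)\,G(r-1),\qquad u\in\mathbb{Z}_{-m}^{\infty} \] (an empty sum being $\Theta$), is the unique solution of \[ \Delta X(u)=A_0X(u-m)+X(u-m)A_1+G(u),\ \ u\in\mathbb{Z}_0^{\infty},\qquad X(u)=\Psi(u),\ \ u\in\mathbb{Z}_{-m}^{0}. \]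
   Context: $\Theta$ and $I$ denote the $d\times d$ zero and identity matrices; $\mathbb{Z}_a^b=\{a,a+1,\dots,b\}$ (with $\mathbb{Z}_a^\infty=\{a,a+1,\dots\}$ and $\mathbb{Z}_{-\infty}^b=\{\dots,b-1,b\}$); $\Delta X(u)=X(u+1)-X(u)$. For integers $a$ and $r\ge0$, $\binom{a}{r}=a(a-1)\cdots(a-r+1)/r!$. Define matrices $Q_{r+1}(rm)$, $r=0,1,2,\dots$, by $Q_1(0)=I$ and $Q_{r+1}(rm)=A_0Q_r((r-1)m)+Q_r((r-1)m)A_1$ for $r\ge1$. Define $Z(u)=\Theta$ for $u\in\mathbb{Z}_{-\infty}^{-m-1}$, $Z(u)=I$ for $u\in\mathbb{Z}_{-m}^{0}$, and for each integer $n\ge1$ and $u\in\mathbb{Z}_{(n-1)(m+1)+1}^{n(m+1)}$, \[ Z(u)=\sum_{r=0}^{n}\binom{u-(r-1)m}{r}Q_{r+1}(rm). \] *)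

theory Defs
  imports "HOL-Analysis.Analysis"
begin

text \<open>d x d real matrices are modelled as real^'n^'n with 'n a finite index type (d = CARD('n)).
  QQ A0 A1 r corresponds to the paper's Q_{r+1}(rm).\<close>

fun QQ :: "real^'n^'n \<Rightarrow> real^'n^'n \<Rightarrow> nat \<Rightarrow> real^'n^'n" where
  "QQ A0 A1 0 = mat 1"
| "QQ A0 A1 (Suc r) = A0 ** QQ A0 A1 r + QQ A0 A1 r ** A1"

definition ibinom :: "int \<Rightarrow> nat \<Rightarrow> real" where
  "ibinom a r = (real_of_int a) gchoose r"

text \<open>The discrete function Z. For u \<ge> 1, n is the unique integer \<ge> 1 with
  (n-1)(m+1)+1 \<le> u \<le> n(m+1), i.e. n = (u-1) div (m+1) + 1.\<close>
definition ZZ :: "real^'n^'n \<Rightarrow> real^'n^'n \<Rightarrow> nat \<Rightarrow> int \<Rightarrow> real^'n^'n" where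
  "ZZ A0 A1 m u =
     (if u < - int m then 0
      else if u \<le> 0 then mat 1
      else (let n = nat ((u - 1) div (int m + 1) + 1) in
            \<Sum>r\<in>{0..n}. ibinom (u - (int r - 1) * int m) r *\<^sub>R QQ A0 A1 r))"

definition Xsol :: "real^'n^'n \<Rightarrow> real^'n^'n \<Rightarrow> nat \<Rightarrow> (int \<Rightarrow> real^'n^'n)
     \<Rightarrow> (int \<Rightarrow> real^'n^'n) \<Rightarrow> int \<Rightarrow> real^'n^'n" where
  "Xsol A0 A1 m \<Psi> G u =
     ZZ A0 A1 m u ** \<Psi> (- int m)
     + (\<Sum>r\<in>{- int m + 1..0}. ZZ A0 A1 m (u - int m - r) ** (\<Psi> r - \<Psi> (r - 1)))
     + (\<Sum>r\<in>{1..u}. ZZ A0 A1 m (u - int m - r) ** G (r - 1))"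

definition is_solution :: "real^'n^'n \<Rightarrow> real^'n^'n \<Rightarrow> nat \<Rightarrow> (int \<Rightarrow> real^'n^'n)
     \<Rightarrow> (int \<Rightarrow> real^'n^'n) \<Rightarrow> (int \<Rightarrow> real^'n^'n) \<Rightarrow> bool" where
  "is_solution A0 A1 m \<Psi> G X \<longleftrightarrow>
     (\<forall>u\<ge>0. X (u + 1) - X u = A0 ** X (u - int m) + X (u - int m) ** A1 + G u) \<and>
     (\<forall>u\<in>{- int m..0}. X u = \<Psi> u)"

end

theory Submission
  imports Defs
begin

text \<open>Write L Y = A0 Y + Y A1, so that Q_{r+2} = L Q_{r+1}. For u \<ge> -m, Z(u) is a binomial sum
  truncated at a level depending only on u div (m+1), and Pascal's rule for the coefficients
  turns the difference Z(v+1) - Z(v) into L(Z(v-m)). Right multiplication by a matrix commuting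
  with A1 commutes with L, so every summand Z(u-m-r) B of X inherits this recursion; the G-sum
  also gains the new term Z(-m) G(u) = G(u). On the initial interval the \<Psi>-sum telescopes to
  \<Psi>(u) - \<Psi>(-m). Uniqueness holds because the equation determines X(u+1) from X(u) and X(u-m).\<close>

lemma matrix_add_rdistrib:
  fixes A B :: "'a::semiring_1^'n^'m" and C :: "'a^'p^'n"
  shows "(A + B) ** C = A ** C + B ** C"
  by (vector matrix_matrix_mult_def sum.distrib[symmetric] distrib_right)

lemma matrix_diff_ldistrib:
  fixes A :: "'a::ring_1^'n^'m" and B C :: "'a^'p^'n"
  shows "A ** (B - C) = A ** B - A ** C"
  using matrix_add_ldistrib[of A "B - C" C] by simp

lemma matrix_diff_rdistrib:
  fixes A B :: "'a::ring_1^'n^'m" and C :: "'a^'p^'n"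
  shows "(A - B) ** C = A ** C - B ** C"
  using matrix_add_rdistrib[of "A - B" B C] by simp

lemma matrix_sum_distrib_left:
  fixes A :: "'a::semiring_1^'n^'m" and f :: "'i \<Rightarrow> 'a^'p^'n"
  shows "A ** (\<Sum>i\<in>S. f i) = (\<Sum>i\<in>S. A ** f i)"
  by (induction S rule: infinite_finite_induct) (auto simp: matrix_add_ldistrib)

lemma matrix_sum_distrib_right:
  fixes f :: "'i \<Rightarrow> 'a::semiring_1^'n^'m" and A :: "'a^'p^'n"
  shows "(\<Sum>i\<in>S. f i) ** A = (\<Sum>i\<in>S. f i ** A)"
  by (induction S rule: infinite_finite_induct) (auto simp: matrix_add_rdistrib)

lemma sum_int_telescope:
  fixes f :: "int \<Rightarrow> 'a::ab_group_add"
  assumes "a \<le> b"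
  shows "(\<Sum>r\<in>{a + 1..b}. f r - f (r - 1)) = f b - f a"
  using assms
proof (induction b rule: int_ge_induct)
  case (step b)
  have "{a + 1..b + 1} = insert (b + 1) {a + 1..b}" using step.hyps by auto
  then show ?case using step.IH by simp
qed simp

definition sylvester_map :: "'a::semiring_1^'n^'n \<Rightarrow> 'a^'n^'n \<Rightarrow> 'a^'n^'n \<Rightarrow> 'a^'n^'n" where
  "sylvester_map A0 A1 Y = A0 ** Y + Y ** A1"

lemma sylvester_map_add:
  "sylvester_map A0 A1 (X + Y) = sylvester_map A0 A1 X + sylvester_map A0 A1 Y"
  by (simp add: sylvester_map_def matrix_add_ldistrib matrix_add_rdistrib add_ac)

lemma sylvester_map_sum:
  "sylvester_map A0 A1 (\<Sum>i\<in>S. f i) = (\<Sum>i\<in>S. sylvester_map A0 A1 (f i))"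
  by (simp add: sylvester_map_def matrix_sum_distrib_left matrix_sum_distrib_right sum.distrib)

lemma sylvester_map_scaleR:
  fixes Y :: "'a::real_algebra_1^'n^'n"
  shows "sylvester_map A0 A1 (c *\<^sub>R Y) = c *\<^sub>R sylvester_map A0 A1 Y"
  by (simp add: sylvester_map_def matrix_scalar_ac scalar_matrix_assoc[symmetric] scaleR_add_right)

lemma sylvester_map_mult_commuting:
  assumes "A1 ** B = B ** A1"
  shows "sylvester_map A0 A1 (Y ** B) = sylvester_map A0 A1 Y ** B"
proof -
  have "Y ** B ** A1 = Y ** A1 ** B"
    by (metis matrix_mul_assoc assms)
  then show ?thesis
    by (simp add: sylvester_map_def matrix_add_rdistrib matrix_mul_assoc)
qed

lemma QQ_Suc_sylvester: "QQ A0 A1 (Suc r) = sylvester_map A0 A1 (QQ A0 A1 r)"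
  by (simp add: sylvester_map_def)

lemma ibinom_pascal: "ibinom (a + 1) (Suc s) = ibinom a (Suc s) + ibinom a s"
  unfolding ibinom_def using gbinomial_Suc_Suc[of "real_of_int a" s] by simp

lemma ibinom_eq_0:
  assumes "0 \<le> a" "a < int k"
  shows "ibinom a k = 0"
proof -
  have "ibinom a k = real (nat a choose k)"
    unfolding ibinom_def using assms(1) by (simp add: binomial_gbinomial)
  then show ?thesis using assms by simp
qed

definition Zsum :: "real^'n^'n \<Rightarrow> real^'n^'n \<Rightarrow> nat \<Rightarrow> nat \<Rightarrow> int \<Rightarrow> real^'n^'n" where
  "Zsum A0 A1 m N u = (\<Sum>r\<le>N. ibinom (u - (int r - 1) * int m) r *\<^sub>R QQ A0 A1 r)"

lemma Zsum_0 [simp]: "Zsum A0 A1 m 0 u = mat 1"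
  by (simp add: Zsum_def ibinom_def)

lemma Zsum_Suc:
  "Zsum A0 A1 m (Suc k) u
     = mat 1 + (\<Sum>s\<le>k. ibinom (u - int s * int m) (Suc s) *\<^sub>R QQ A0 A1 (Suc s))"
  unfolding Zsum_def sum.atMost_Suc_shift by (simp add: ibinom_def del: QQ.simps(2))

lemma Zsum_Suc_step:
  "Zsum A0 A1 m (Suc k) (w + 1)
     = Zsum A0 A1 m (Suc k) w + sylvester_map A0 A1 (Zsum A0 A1 m k (w - int m))"
proof -
  let ?Q = "QQ A0 A1" and ?c = "\<lambda>s. ibinom (w - int s * int m) s"
  have "Zsum A0 A1 m (Suc k) (w + 1)
      = mat 1 + (\<Sum>s\<le>k. ibinom (w - int s * int m + 1) (Suc s) *\<^sub>R ?Q (Suc s))"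
    unfolding Zsum_Suc by (simp add: algebra_simps)
  also have "\<dots> = Zsum A0 A1 m (Suc k) w + (\<Sum>s\<le>k. ?c s *\<^sub>R ?Q (Suc s))"
    unfolding Zsum_Suc ibinom_pascal by (simp add: scaleR_add_left sum.distrib)
  also have "(\<Sum>s\<le>k. ?c s *\<^sub>R ?Q (Suc s)) = sylvester_map A0 A1 (Zsum A0 A1 m k (w - int m))"
    by (simp add: Zsum_def sylvester_map_sum sylvester_map_scaleR QQ_Suc_sylvester algebra_simps
        del: QQ.simps)
  finally show ?thesis .
qed

lemma ZZ_below: "u < - int m \<Longrightarrow> ZZ A0 A1 m u = 0"
  by (simp add: ZZ_def)

lemma ZZ_initial: "- int m \<le> u \<Longrightarrow> u \<le> 0 \<Longrightarrow> ZZ A0 A1 m u = mat 1"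
  by (simp add: ZZ_def)

lemma ZZ_eq_Zsum:
  assumes "- int m \<le> u"
  shows "ZZ A0 A1 m u = Zsum A0 A1 m (nat ((u + int m) div (int m + 1))) u"
proof (cases "u \<le> 0")
  case True
  then have "(u + int m) div (int m + 1) = 0"
    using assms by simp
  then show ?thesis using True assms by (simp add: ZZ_initial)
next
  case False
  have "(u + int m) div (int m + 1) = ((u - 1) + (int m + 1) * 1) div (int m + 1)"
    by simp
  also have "\<dots> = (u - 1) div (int m + 1) + 1"
    by (subst div_mult_self2) simp_all
  finally have "(u + int m) div (int m + 1) = (u - 1) div (int m + 1) + 1" .
  then show ?thesis using False by (simp add: ZZ_def Zsum_def Let_def atLeast0AtMost)
qed

lemma ZZ_eq_Zsum_Suc:
  assumes "0 \<le> u"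
  shows "ZZ A0 A1 m u = Zsum A0 A1 m (Suc (nat (u div (int m + 1)))) u"
proof -
  define d where "d = int m + 1"
  define k where "k = u div d"
  define r where "r = u mod d"
  have d: "0 < d" "int m < d" by (simp_all add: d_def)
  have k0: "0 \<le> k" using assms d by (simp add: k_def pos_imp_zdiv_nonneg_iff)
  have u: "u = r + k * d" by (simp add: k_def r_def)
  have r: "0 \<le> r" "r < d" using d by (simp_all add: r_def)
  have Z: "ZZ A0 A1 m u = Zsum A0 A1 m (nat ((u + int m) div d)) u"
    using ZZ_eq_Zsum[of m u] assms by (simp add: d_def)
  show ?thesis
  proof (cases "r = 0")
    case True
    \<comment> \<open>the level drops by one, but the extra term carries the coefficient k gchoose (k + 1) = 0\<close>
    have "(u + int m) div d = (int m + d * k) div d"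
      using u True by (simp add: algebra_simps)
    also have "\<dots> = k"
      using d by (subst div_mult_self2) simp_all
    finally have "(u + int m) div d = k" .
    moreover have "ibinom (u - int (nat k) * int m) (Suc (nat k)) = 0"
      using u True k0 by (intro ibinom_eq_0) (auto simp: d_def algebra_simps)
    ultimately show ?thesis
      using Z by (simp add: Zsum_def k_def d_def)
  next
    case False
    have "(u + int m) div d = ((r - 1) + d * (k + 1)) div d"
      using u by (simp add: d_def algebra_simps)
    also have "\<dots> = k + 1"
      using False r d by (subst div_mult_self2) (simp_all add: d_def)
    finally have "(u + int m) div d = k + 1" .
    then show ?thesis using Z k0 by (simp add: k_def d_def nat_add_distrib)
  qed
qed

lemma ZZ_step:
  assumes "- int m \<le> v"
  shows "ZZ A0 A1 m (v + 1) = ZZ A0 A1 m v + sylvester_map A0 A1 (ZZ A0 A1 m (v - int m))"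
proof (cases "v < 0")
  case True
  then show ?thesis
    using assms by (simp add: ZZ_initial ZZ_below sylvester_map_def)
next
  case False
  define k where "k = nat (v div (int m + 1))"
  have "(v + 1 + int m) div (int m + 1) = (v + (int m + 1) * 1) div (int m + 1)"
    by (simp add: algebra_simps)
  also have "\<dots> = v div (int m + 1) + 1"
    by (subst div_mult_self2) simp_all
  finally have "ZZ A0 A1 m (v + 1) = Zsum A0 A1 m (Suc k) (v + 1)"
    using ZZ_eq_Zsum[of m "v + 1"] False
    by (simp add: k_def nat_add_distrib pos_imp_zdiv_nonneg_iff)
  moreover have "ZZ A0 A1 m v = Zsum A0 A1 m (Suc k) v"
    using ZZ_eq_Zsum_Suc[of v] False by (simp add: k_def)
  moreover have "ZZ A0 A1 m (v - int m) = Zsum A0 A1 m k (v - int m)"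
    using ZZ_eq_Zsum[of m "v - int m"] False by (simp add: k_def)
  ultimately show ?thesis
    by (simp add: Zsum_Suc_step)
qed

lemma ZZ_mult_step:
  assumes "- int m \<le> v" and "A1 ** B = B ** A1"
  shows "ZZ A0 A1 m (v + 1) ** B
           = ZZ A0 A1 m v ** B + sylvester_map A0 A1 (ZZ A0 A1 m (v - int m) ** B)"
  using ZZ_step[OF assms(1), of A0 A1]
  by (simp add: matrix_add_rdistrib sylvester_map_mult_commuting[OF assms(2)])

lemma ZZ_sum_step:
  assumes "\<And>r. r \<in> S \<Longrightarrow> r \<le> u" and "\<And>r. r \<in> S \<Longrightarrow> A1 ** B r = B r ** A1"
  shows "(\<Sum>r\<in>S. ZZ A0 A1 m (u + 1 - int m - r) ** B r)
           = (\<Sum>r\<in>S. ZZ A0 A1 m (u - int m - r) ** B r)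
             + sylvester_map A0 A1 (\<Sum>r\<in>S. ZZ A0 A1 m (u - int m - int m - r) ** B r)"
proof -
  have "ZZ A0 A1 m (u + 1 - int m - r) ** B r
          = ZZ A0 A1 m (u - int m - r) ** B r
            + sylvester_map A0 A1 (ZZ A0 A1 m (u - int m - int m - r) ** B r)" if "r \<in> S" for r
    using ZZ_mult_step[of m "u - int m - r" A1 "B r" A0] assms[OF that]
    by (simp add: algebra_simps)
  then show ?thesis
    by (simp add: sylvester_map_sum sum.distrib)
qed

lemma Xsol_initial:
  assumes "- int m \<le> u" "u \<le> 0"
  shows "Xsol A0 A1 m \<Psi> G u = \<Psi> u"
proof -
  have "(\<Sum>r\<in>{- int m + 1..0}. ZZ A0 A1 m (u - int m - r) ** (\<Psi> r - \<Psi> (r - 1)))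
      = (\<Sum>r\<in>{- int m + 1..u}. \<Psi> r - \<Psi> (r - 1))"
  proof (rule sum.mono_neutral_cong_right)
    show "\<forall>r\<in>{- int m + 1..0} - {- int m + 1..u}.
        ZZ A0 A1 m (u - int m - r) ** (\<Psi> r - \<Psi> (r - 1)) = 0"
      by (auto simp: ZZ_below)
    show "ZZ A0 A1 m (u - int m - r) ** (\<Psi> r - \<Psi> (r - 1)) = \<Psi> r - \<Psi> (r - 1)"
      if "r \<in> {- int m + 1..u}" for r
      using that assms by (simp add: ZZ_initial)
  qed (use assms in auto)
  also have "\<dots> = \<Psi> u - \<Psi> (- int m)"
    using sum_int_telescope[OF assms(1), of \<Psi>] by simp
  finally show ?thesis
    using assms by (simp add: Xsol_def ZZ_initial)
qed

lemma Xsol_step: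
  assumes "\<And>u. u \<ge> 0 \<Longrightarrow> A1 ** G u = G u ** A1"
    and \<Psi>: "\<And>u. u \<in> {- int m..0} \<Longrightarrow> A1 ** \<Psi> u = \<Psi> u ** A1"
    and "0 \<le> u"
  shows "Xsol A0 A1 m \<Psi> G (u + 1)
           = Xsol A0 A1 m \<Psi> G u + sylvester_map A0 A1 (Xsol A0 A1 m \<Psi> G (u - int m)) + G u"
proof -
  let ?Z = "ZZ A0 A1 m" and ?S = "sylvester_map A0 A1"
  have initial: "?Z (u + 1) ** \<Psi> (- int m)
      = ?Z u ** \<Psi> (- int m) + ?S (?Z (u - int m) ** \<Psi> (- int m))"
    using assms by (intro ZZ_mult_step \<Psi>) auto
  have increments: "(\<Sum>r\<in>{- int m + 1..0}. ?Z (u + 1 - int m - r) ** (\<Psi> r - \<Psi> (r - 1)))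
      = (\<Sum>r\<in>{- int m + 1..0}. ?Z (u - int m - r) ** (\<Psi> r - \<Psi> (r - 1)))
        + ?S (\<Sum>r\<in>{- int m + 1..0}. ?Z (u - int m - int m - r) ** (\<Psi> r - \<Psi> (r - 1)))"
    using assms \<Psi> by (intro ZZ_sum_step) (auto simp: matrix_diff_ldistrib matrix_diff_rdistrib)
  have "(\<Sum>r\<in>{1..u}. ?Z (u - int m - int m - r) ** G (r - 1))
      = (\<Sum>r\<in>{1..u - int m}. ?Z (u - int m - int m - r) ** G (r - 1))"
    by (rule sum.mono_neutral_right) (auto simp: ZZ_below)
  moreover have "(\<Sum>r\<in>{1..u}. ?Z (u + 1 - int m - r) ** G (r - 1))
      = (\<Sum>r\<in>{1..u}. ?Z (u - int m - r) ** G (r - 1))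
        + ?S (\<Sum>r\<in>{1..u}. ?Z (u - int m - int m - r) ** G (r - 1))"
    using assms by (intro ZZ_sum_step) auto
  moreover have "{1..u + 1} = insert (u + 1) {1..u}"
    using assms by auto
  ultimately have forcing: "(\<Sum>r\<in>{1..u + 1}. ?Z (u + 1 - int m - r) ** G (r - 1))
      = (\<Sum>r\<in>{1..u}. ?Z (u - int m - r) ** G (r - 1)) + G u
        + ?S (\<Sum>r\<in>{1..u - int m}. ?Z (u - int m - int m - r) ** G (r - 1))"
    by (simp add: ZZ_initial)
  show ?thesis
    unfolding Xsol_def initial increments forcing sylvester_map_add by (simp add: add_ac)
qed

lemma Xsol_is_solution:
  assumes "\<And>u. u \<ge> 0 \<Longrightarrow> A1 ** G u = G u ** A1"
    and "\<And>u. u \<in> {- int m..0} \<Longrightarrow> A1 ** \<Psi> u = \<Psi> u ** A1"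
  shows "is_solution A0 A1 m \<Psi> G (Xsol A0 A1 m \<Psi> G)"
  unfolding is_solution_def
proof (intro conjI allI impI ballI)
  fix u :: int
  assume "0 \<le> u"
  then show "Xsol A0 A1 m \<Psi> G (u + 1) - Xsol A0 A1 m \<Psi> G u
      = A0 ** Xsol A0 A1 m \<Psi> G (u - int m) + Xsol A0 A1 m \<Psi> G (u - int m) ** A1 + G u"
    using Xsol_step[OF assms] by (simp add: sylvester_map_def)
qed (auto intro: Xsol_initial)

lemma is_solution_unique:
  assumes X: "is_solution A0 A1 m \<Psi> G X" and Y: "is_solution A0 A1 m \<Psi> G Y"
    and "- int m \<le> u"
  shows "X u = Y u"
  using assms(3)
proof (induction "nat (u + int m)" arbitrary: u rule: less_induct)
  case less
  show ?case
  proof (cases "u \<le> 0")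
    case True
    then show ?thesis
      using X Y less.prems by (simp add: is_solution_def)
  next
    case False
    have step: "Z u = Z (u - 1) + (A0 ** Z (u - 1 - int m) + Z (u - 1 - int m) ** A1 + G (u - 1))"
      if "is_solution A0 A1 m \<Psi> G Z" for Z
    proof -
      have "Z (u - 1 + 1) - Z (u - 1) = A0 ** Z (u - 1 - int m) + Z (u - 1 - int m) ** A1 + G (u - 1)"
        using that False unfolding is_solution_def by (auto dest: spec[of _ "u - 1"])
      then show ?thesis
        by (simp add: diff_eq_eq add.commute)
    qed
    have "X (u - 1) = Y (u - 1)" "X (u - 1 - int m) = Y (u - 1 - int m)"
      using less False by auto
    then show ?thesis
      using step[OF X] step[OF Y] by simp
  qed
qed

theorem theorem9:
  fixes A0 A1 :: "real^'n^'n" and m :: nat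
    and G \<Psi> :: "int \<Rightarrow> real^'n^'n"
  assumes "m \<ge> 1"
    and "\<And>u. u \<ge> 0 \<Longrightarrow> A1 ** G u = G u ** A1"
    and "\<And>u. u \<in> {- int m..0} \<Longrightarrow> A1 ** \<Psi> u = \<Psi> u ** A1"
  shows "is_solution A0 A1 m \<Psi> G (Xsol A0 A1 m \<Psi> G) \<and>
         (\<forall>Y. is_solution A0 A1 m \<Psi> G Y \<longrightarrow>
              (\<forall>u\<ge>- int m. Y u = Xsol A0 A1 m \<Psi> G u))"
proof -
  have "is_solution A0 A1 m \<Psi> G (Xsol A0 A1 m \<Psi> G)"
    using assms(2,3) by (rule Xsol_is_solution)
  then show ?thesis
    using is_solution_unique by blast
qed

end
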